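(* Let $n\in\mathbb{N}$, $a,b\in\mathbb{C}$ with $b\notin\mathbb{Z}^-$, and let $c\in\mathbb{C}$. (i) If $c\neq0$, then \[ \frac{1}{n+b+1}\sum_{j=0}^{n}\sum_{i=0}^{j}\frac{\binom{n+a+1}{i}}{\binom{n+b}{j}}\,c^{i-j} =\frac{1}{b+1}\sum_{k=0}^{n}\sum_{j=0}^{k}\frac{\binom{k+a}{j}}{\binom{k+b+1}{k}}\,c^{j-k}. \] (ii) If $|c+1|>1$, $a-b\notin\{0,-1,-2,\dots\}$ and $a\notin\mathbb{Z}^-$, then \[ \frac{(a-b)(c+1)}{(n+b+1)c}\sum_{j=0}^{n}\sum_{i=0}^{j}\frac{\binom{n+a+1}{i}}{\binom{n+b}{j}}\,c^{i-j} =\frac{(a+1)_{n+1}}{(b+1)_{n+1}}\;{}_3F_2\!\left(1,a-b,n+a+2;\,a-b+1,a+1;\,\tfrac{1}{c+1}\right)-{}_2F_1\!\left(1,a-b;\,a-b+1;\,\tfrac{1}{c+1}\right). \] (iii) If $|c+1|>1$ and $a=b-m$ with $m\in\mathbb{N}$, then \[ \frac{(c+1)^{b-a+1}}{(n+b+1)c}\sum_{j=0}^{n}\sum_{i=0}^{j}\frac{\binom{n+a+1}{i}}{\binom{n+b}{j}}\,c^{i-j} =\frac{n+b+2}{(b+1)(c+1)}\,{}_3F_2\!\left(1,1,n+b+3;\,2,b+2;\,\tfrac{1}{c+1}\right)+\psi(n+b+2)-\psi(b+1)+\log\frac{c}{c+1}-\sum_{\ell=1}^{b-a}\frac{(c+1)^{\ell}}{\ell}\left(\frac{(b+1-\ell)_{n+1}}{(b+1)_{n+1}}-1\right).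 \]
   Context: For $x\in\mathbb{C}$, $i\in\mathbb{N}$: $\binom{x}{i}=x(x-1)\cdots(x-i+1)/i!$. $\mathbb{Z}^-=\{-1,-2,\dots\}$. Pochhammer symbol: $(\alpha)_0=1$, $(\alpha)_k=\alpha(\alpha+1)\cdots(\alpha+k-1)$. Hypergeometric functions: ${}_2F_1(a,b;c;z)=\sum_{k\ge0}\frac{(a)_k(b)_k}{(c)_k}\frac{z^k}{k!}$ and ${}_3F_2(a,b,c;d,e;z)=\sum_{k\ge0}\frac{(a)_k(b)_k(c)_k}{(d)_k(e)_k}\frac{z^k}{k!}$, convergent for $|z|<1$. $\psi=\Gamma'/\Gamma$ is the digamma function (so $\psi(n+b+2)-\psi(b+1)=\sum_{k=1}^{n+1}\frac{1}{b+k}$), and $\log$ is the principal branch. (The paper asserts (ii),(iii) for all $c\notin\{-1,0\}$ with the hypergeometric functions understood by analytic continuation; here they are stated in the region $|c+1|>1$ where the series converge.) *)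

theory Defs
  imports "HOL-Analysis.Analysis"
begin

text \<open>Gauss hypergeometric series 2F1(a,b;c;z) (as a formal series sum; used only for |z|<1).\<close>
definition hyp2F1 :: "complex \<Rightarrow> complex \<Rightarrow> complex \<Rightarrow> complex \<Rightarrow> complex" where
  "hyp2F1 a b c z = (\<Sum>k. pochhammer a k * pochhammer b k / pochhammer c k * z ^ k / fact k)"

definition hyp3F2 :: "complex \<Rightarrow> complex \<Rightarrow> complex \<Rightarrow> complex \<Rightarrow> complex \<Rightarrow> complex \<Rightarrow> complex" where
  "hyp3F2 a b c d e z =
     (\<Sum>k. pochhammer a k * pochhammer b k * pochhammer c k / (pochhammer d k * pochhammer e k) * z ^ k / fact k)"

definition dsum :: "nat \<Rightarrow> complex \<Rightarrow> complex \<Rightarrow> complex \<Rightarrow> complex" where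
  "dsum n a b c = (\<Sum>j=0..n. \<Sum>i=0..j.
      ((of_nat n + a + 1) gchoose i) / ((of_nat n + b) gchoose j) * c powi (int i - int j))"

end

theory Submission
  imports Defs "HOL-Complex_Analysis.Conformal_Mappings"
begin

text \<open>
  Put \<open>z = 1/(c+1)\<close> and \<open>\<Phi>\<^sub>n(b,x) = \<Sum>\<^sub>r\<^sub>\<le>\<^sub>n (x+1)\<^sub>r/(b+1)\<^sub>r\<^sub>+\<^sub>1\<close> (\<open>poch_quot_sum\<close>), which telescopes:
  \<open>(x-b) \<Phi>\<^sub>n(b,x) = (x+1)\<^sub>n\<^sub>+\<^sub>1/(b+1)\<^sub>n\<^sub>+\<^sub>1 - 1\<close>.
  It yields \<open>\<Sum>\<^sub>j binom(x+n+1,j)/binom(n+b,j) = (n+b+1) \<Phi>\<^sub>n(b,x)\<close>, and expanding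
  \<open>binom(x+k,r)\<close> in powers of \<open>z\<close> (Vandermonde and the negative binomial series) shows
  that for \<open>|c+1| > 1\<close> both sides of (i), times \<open>(c+1)/c\<close>, equal the generating function
  \<open>\<Sum>\<^sub>k \<Phi>\<^sub>n(b,a+k) z\<^sup>k\<close>; as both are holomorphic on \<open>c \<noteq> 0\<close>, (i) holds there.
  In (ii) the telescoping identity at \<open>x = a+k\<close> splits the \<open>k\<close>-th term of the generating
  function into the \<open>k\<close>-th terms of the \<open>\<^sub>3F\<^sub>2\<close> and \<open>\<^sub>2F\<^sub>1\<close> series. In (iii), where
  \<open>a = b - m\<close>, the terms \<open>k < m\<close> give the finite sum, \<open>k = m\<close> the digamma difference,
  and \<open>k > m\<close> the \<open>\<^sub>3F\<^sub>2\<close> series plus the series of \<open>log (c/(c+1))\<close>.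
\<close>

lemma notin_nonpos_Ints_iff:
  "(x :: 'a :: ring_1) \<notin> \<int>\<^sub>\<le>\<^sub>0 \<longleftrightarrow> (\<forall>k. x \<noteq> - of_nat k)"
  by (auto elim: nonpos_Ints_cases')

lemma plus_one_notin_nonpos_Ints_iff:
  "(x :: 'a :: ring_1) + 1 \<notin> \<int>\<^sub>\<le>\<^sub>0 \<longleftrightarrow> (\<forall>k. x \<noteq> - of_nat (Suc k))"
  unfolding notin_nonpos_Ints_iff
  by (metis add_diff_cancel diff_minus_eq_add minus_add_distrib of_nat_Suc add.commute)

lemma plus_of_nat_notin_nonpos_Ints:
  fixes x :: "'a :: ring_1"
  assumes "x \<notin> \<int>\<^sub>\<le>\<^sub>0"
  shows "x + of_nat k \<notin> \<int>\<^sub>\<le>\<^sub>0"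
  using assms nonpos_Ints_diff_Nats[of "x + of_nat k" "of_nat k"] by auto

lemma plus_of_nat_neq_0:
  fixes x :: "'a :: ring_1"
  assumes "x \<notin> \<int>\<^sub>\<le>\<^sub>0"
  shows "x + of_nat k \<noteq> 0"
  using plus_of_nat_notin_nonpos_Ints[OF assms, of k] by auto

lemma pochhammer_plus_of_nat_neq_0:
  fixes x :: "'a :: field_char_0"
  assumes "x \<notin> \<int>\<^sub>\<le>\<^sub>0"
  shows "pochhammer (x + of_nat k) m \<noteq> 0"
  using pochhammer_eq_0_imp_nonpos_Int plus_of_nat_notin_nonpos_Ints[OF assms] by blast

lemma pochhammer_neq_0:
  fixes x :: "'a :: field_char_0"
  assumes "x \<notin> \<int>\<^sub>\<le>\<^sub>0"
  shows "pochhammer x m \<noteq> 0"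
  using pochhammer_eq_0_imp_nonpos_Int assms by blast

lemma pochhammer_swap_shift:
  "pochhammer x m * pochhammer (x + of_nat m) k = pochhammer x k * pochhammer (x + of_nat k) m"
  by (metis add.commute pochhammer_product')

lemma gchoose_div_gchoose:
  fixes x y :: "'a :: field_char_0"
  shows "((x + of_nat n) gchoose n) / ((y + of_nat n) gchoose n) = pochhammer (x + 1) n / pochhammer (y + 1) n"
  by (simp add: gbinomial_pochhammer')

definition poch_quot_sum :: "nat \<Rightarrow> 'a \<Rightarrow> 'a \<Rightarrow> 'a :: field_char_0" where
  "poch_quot_sum n b x = (\<Sum>r=0..n. pochhammer (x + 1) r / pochhammer (b + 1) (Suc r))"

lemma poch_quot_sum_telescope:
  fixes b x :: "'a :: field_char_0"
  assumes "b + 1 \<notin> \<int>\<^sub>\<le>\<^sub>0"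
  shows "(x - b) * poch_quot_sum n b x = pochhammer (x + 1) (Suc n) / pochhammer (b + 1) (Suc n) - 1"
proof (induction n)
  case 0
  have "b + 1 \<noteq> 0" using assms by auto
  then show ?case by (simp add: poch_quot_sum_def field_simps)
next
  case (Suc n)
  define X where "X = pochhammer (x + 1) (Suc n)"
  define B where "B = pochhammer (b + 1) (Suc n)"
  define D where "D = b + 1 + of_nat (Suc n)"
  have "B \<noteq> 0" unfolding B_def using pochhammer_neq_0[OF assms] .
  have "D \<noteq> 0" unfolding D_def using plus_of_nat_neq_0[OF assms] .
  have "(x - b) * poch_quot_sum (Suc n) b x = (x - b) * poch_quot_sum n b x + (x - b) * X / (D * B)"
    by (simp add: poch_quot_sum_def X_def B_def D_def pochhammer_rec'[of _ "Suc n"] algebra_simps)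
  also have "\<dots> = X / B - 1 + (x - b) * X / (D * B)"
    unfolding Suc.IH X_def B_def ..
  also have "\<dots> = (D + (x - b)) * X / (D * B) - 1"
    using \<open>B \<noteq> 0\<close> \<open>D \<noteq> 0\<close> by (simp add: field_simps)
  also have "D + (x - b) = x + 1 + of_nat (Suc n)" by (simp add: D_def)
  finally show ?case by (simp add: X_def B_def D_def pochhammer_rec'[of _ "Suc n"])
qed

lemma poch_quot_sum_Suc:
  "poch_quot_sum (Suc n) b x = 1 / (b + 1) + (x + 1) / (b + 1) * poch_quot_sum n (b + 1) (x + 1)"
  unfolding poch_quot_sum_def
  by (subst sum.atLeast0_atMost_Suc_shift) (simp add: sum_distrib_left pochhammer_rec add_ac)

lemma sum_gchoose_div_gchoose:
  fixes b x :: "'a :: field_char_0"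
  assumes "b + 1 \<notin> \<int>\<^sub>\<le>\<^sub>0"
  shows "(\<Sum>j=0..n. ((x + of_nat n + 1) gchoose j) / ((of_nat n + b) gchoose j))
       = (of_nat n + b + 1) * poch_quot_sum n b x"
  using assms
proof (induction n arbitrary: x b)
  case 0
  then have "b + 1 \<noteq> 0" by auto
  then show ?case by (simp add: poch_quot_sum_def)
next
  case (Suc n)
  define \<Phi> where "\<Phi> = poch_quot_sum n (b + 1) (x + 1)"
  define P where "P = pochhammer (x + 2) (Suc n)"
  define Q where "Q = pochhammer (b + 2) (Suc n)"
  have b2: "b + 1 + 1 \<notin> \<int>\<^sub>\<le>\<^sub>0"
    using plus_of_nat_notin_nonpos_Ints[OF Suc.prems, of 1] by simp
  have IH: "(\<Sum>j=0..n. ((x + of_nat (Suc n) + 1) gchoose j) / ((of_nat (Suc n) + b) gchoose j))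
      = (of_nat n + b + 2) * \<Phi>"
    using Suc.IH[of "b + 1" "x + 1"] b2 by (simp add: \<Phi>_def add_ac)
  have last: "((x + of_nat (Suc n) + 1) gchoose Suc n) / ((of_nat (Suc n) + b) gchoose Suc n)
      = P / pochhammer (b + 1) (Suc n)"
    using gchoose_div_gchoose[of "x + 1" "Suc n" b] by (simp add: P_def add_ac)
  have tel: "(x - b) * \<Phi> = P / Q - 1"
    using poch_quot_sum_telescope[OF b2, of "x + 1" n] by (simp add: \<Phi>_def P_def Q_def add_ac)
  have QP: "(b + 1) * Q = pochhammer (b + 1) (Suc n) * (of_nat n + b + 2)"
    using pochhammer_rec[of "b + 1" "Suc n"] pochhammer_rec'[of "b + 1" "Suc n"]
    by (simp add: Q_def add_ac)
  have b1: "b + 1 \<noteq> 0" using Suc.prems by auto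
  have "Q \<noteq> 0" using pochhammer_neq_0[OF b2] by (simp add: Q_def add_ac)
  have "(of_nat (Suc n) + b + 1) * poch_quot_sum (Suc n) b x
      = (of_nat n + b + 2) * \<Phi> + (of_nat n + b + 2) / (b + 1) * (1 + (x - b) * \<Phi>)"
    unfolding poch_quot_sum_Suc \<Phi>_def[symmetric] using b1 by (simp add: field_simps)
  also have "(of_nat n + b + 2) / (b + 1) * (1 + (x - b) * \<Phi>) = P * (of_nat n + b + 2) / ((b + 1) * Q)"
    unfolding tel by simp
  also have "\<dots> = P / pochhammer (b + 1) (Suc n)"
    unfolding QP using plus_of_nat_neq_0[OF Suc.prems, of "Suc n"] by (simp add: add_ac)
  finally show ?case unfolding sum.atLeast0_atMost_Suc IH last by simp
qed

lemma Digamma_plus_of_nat: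
  fixes z :: "'a :: {real_normed_field, banach}"
  assumes "z \<notin> \<int>\<^sub>\<le>\<^sub>0"
  shows "Digamma (z + of_nat n) = Digamma z + (\<Sum>r<n. 1 / (z + of_nat r))"
proof (induction n)
  case (Suc n)
  have "z + of_nat n \<noteq> 0" using plus_of_nat_neq_0[OF assms] .
  then show ?case using Suc.IH Digamma_plus1[of "z + of_nat n"] by (simp add: add_ac)
qed simp

lemma poch_quot_sum_self:
  fixes b :: complex
  assumes "b + 1 \<notin> \<int>\<^sub>\<le>\<^sub>0"
  shows "poch_quot_sum n b b = Digamma (of_nat n + b + 2) - Digamma (b + 1)"
proof -
  have "pochhammer (b + 1) r / pochhammer (b + 1) (Suc r) = 1 / (b + 1 + of_nat r)" for r
    using pochhammer_neq_0[OF assms, of r] plus_of_nat_neq_0[OF assms, of r]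
    by (simp add: pochhammer_rec')
  then have "poch_quot_sum n b b = (\<Sum>r<Suc n. 1 / (b + 1 + of_nat r))"
    by (simp add: poch_quot_sum_def atLeast0AtMost lessThan_Suc_atMost)
  also have "\<dots> = Digamma (b + 1 + of_nat (Suc n)) - Digamma (b + 1)"
    unfolding Digamma_plus_of_nat[OF assms] by simp
  also have "b + 1 + of_nat (Suc n) = of_nat n + b + 2" by simp
  finally show ?thesis .
qed

lemma sums_choose_power:
  fixes z :: complex
  assumes "norm z < 1"
  shows "(\<lambda>k. of_nat (k choose s) * z ^ k) sums (z ^ s / (1 - z) ^ Suc s)"
proof -
  have "(\<lambda>k. (-1) ^ k * ((of_nat (Suc s) + of_nat k - 1) gchoose k) * (- z) ^ k)
      sums (1 + - z) powr (- of_nat (Suc s))"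
    by (rule one_plus_neg_powr_powser) (simp add: assms)
  moreover have "(-1) ^ k * ((of_nat (Suc s) + of_nat k - 1) gchoose k) * (- z) ^ k
      = of_nat ((s + k) choose k) * z ^ k" for k
    by (simp add: binomial_gbinomial power_minus' mult_ac)
  moreover have "(1 + - z) powr (- of_nat (Suc s)) = inverse ((1 - z) ^ Suc s)"
    using powr_nat'[of "1 - z" "Suc s"] by (simp only: powr_minus flip: diff_conv_add_uminus) simp
  ultimately have "(\<lambda>k. z ^ s * (of_nat ((s + k) choose k) * z ^ k)) sums (z ^ s / (1 - z) ^ Suc s)"
    using sums_mult[of _ _ "z ^ s"] by (simp add: divide_inverse)
  moreover have "z ^ s * (of_nat ((s + k) choose k) * z ^ k) = of_nat ((k + s) choose s) * z ^ (k + s)" for k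
    using binomial_symmetric[of k "k + s"] by (simp add: power_add add.commute mult_ac)
  ultimately show ?thesis
    by (subst sums_zero_iff_shift[of s, symmetric]) auto
qed

lemma sums_gchoose_plus_of_nat_power:
  fixes x c :: complex
  assumes "1 < cmod (c + 1)"
  shows "(\<lambda>k. ((x + of_nat k) gchoose r) * (1 / (c + 1)) ^ k)
      sums ((c + 1) / c * (\<Sum>i=0..r. (x gchoose i) * c powi (int i - int r)))"
proof -
  define z where "z = 1 / (c + 1)"
  have "c + 1 \<noteq> 0" "c \<noteq> 0" using assms by auto
  have "norm z < 1" unfolding z_def using assms by (simp add: norm_divide divide_less_eq)
  then have S: "(\<lambda>k. \<Sum>i=0..r. (x gchoose i) * (of_nat (k choose (r - i)) * z ^ k))
      sums (\<Sum>i=0..r. (x gchoose i) * (z ^ (r - i) / (1 - z) ^ Suc (r - i)))"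
    by (intro sums_sum sums_mult sums_choose_power)
  have "(\<Sum>i=0..r. (x gchoose i) * (of_nat (k choose (r - i)) * z ^ k)) = ((x + of_nat k) gchoose r) * z ^ k" for k
    by (simp add: gbinomial_Vandermonde[symmetric] sum_distrib_right binomial_gbinomial mult.assoc)
  moreover have "(\<Sum>i=0..r. (x gchoose i) * (z ^ (r - i) / (1 - z) ^ Suc (r - i)))
      = (c + 1) / c * (\<Sum>i=0..r. (x gchoose i) * c powi (int i - int r))"
  proof -
    have "z ^ (r - i) / (1 - z) ^ Suc (r - i) = (c + 1) / c * c powi (int i - int r)" if "i \<le> r" for i
      using that \<open>c + 1 \<noteq> 0\<close> \<open>c \<noteq> 0\<close>
      by (simp add: z_def power_int_def nat_diff_distrib field_simps power_divide)
    then show ?thesis by (simp add: sum_distrib_left mult_ac)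
  qed
  ultimately show ?thesis using S by (simp add: z_def)
qed

lemma sums_poch_quot_sum_dsum:
  fixes a b c :: complex
  assumes b: "b + 1 \<notin> \<int>\<^sub>\<le>\<^sub>0" and c: "1 < cmod (c + 1)"
  shows "(\<lambda>k. poch_quot_sum n b (a + of_nat k) * (1 / (c + 1)) ^ k)
      sums ((c + 1) / c * dsum n a b c / (of_nat n + b + 1))"
proof -
  define z where "z = 1 / (c + 1)"
  define d where "d = of_nat n + b + 1"
  have "d \<noteq> 0" unfolding d_def using plus_of_nat_neq_0[OF b, of n] by (simp add: add_ac)
  have S: "(\<lambda>k. \<Sum>j=0..n. 1 / ((of_nat n + b) gchoose j) * (((of_nat n + a + 1 + of_nat k) gchoose j) * z ^ k))
      sums (\<Sum>j=0..n. 1 / ((of_nat n + b) gchoose j)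
              * ((c + 1) / c * (\<Sum>i=0..j. ((of_nat n + a + 1) gchoose i) * c powi (int i - int j))))"
    unfolding z_def by (intro sums_sum sums_mult sums_gchoose_plus_of_nat_power c)
  have "(\<Sum>j=0..n. 1 / ((of_nat n + b) gchoose j) * (((of_nat n + a + 1 + of_nat k) gchoose j) * z ^ k))
      = (\<Sum>j=0..n. (((a + of_nat k) + of_nat n + 1) gchoose j) / ((of_nat n + b) gchoose j)) * z ^ k" for k
    by (simp add: sum_distrib_right add_ac)
  also have "\<dots> k = d * (poch_quot_sum n b (a + of_nat k) * z ^ k)" for k
    unfolding sum_gchoose_div_gchoose[OF b] d_def by simp
  moreover have "(\<Sum>j=0..n. 1 / ((of_nat n + b) gchoose j)
              * ((c + 1) / c * (\<Sum>i=0..j. ((of_nat n + a + 1) gchoose i) * c powi (int i - int j))))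
      = (c + 1) / c * dsum n a b c"
    unfolding dsum_def by (simp add: sum_distrib_left mult_ac)
  ultimately have "(\<lambda>k. d * (poch_quot_sum n b (a + of_nat k) * z ^ k)) sums (d * ((c + 1) / c * dsum n a b c / d))"
    using S \<open>d \<noteq> 0\<close> by simp
  then show ?thesis
    unfolding sums_mult_iff[OF \<open>d \<noteq> 0\<close>] by (simp add: z_def d_def)
qed

lemma sums_poch_quot_sum_rhs:
  fixes a b c :: complex
  assumes c: "1 < cmod (c + 1)"
  shows "(\<lambda>k. poch_quot_sum n b (a + of_nat k) * (1 / (c + 1)) ^ k)
      sums ((c + 1) / c * (1 / (b + 1) * (\<Sum>r=0..n. \<Sum>j=0..r.
          ((of_nat r + a) gchoose j) / ((of_nat r + b + 1) gchoose r) * c powi (int j - int r))))"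
proof -
  define z where "z = 1 / (c + 1)"
  have S: "(\<lambda>k. \<Sum>r=0..n. 1 / (b + 1) / ((of_nat r + b + 1) gchoose r) * (((of_nat r + a + of_nat k) gchoose r) * z ^ k))
      sums (\<Sum>r=0..n. 1 / (b + 1) / ((of_nat r + b + 1) gchoose r)
              * ((c + 1) / c * (\<Sum>j=0..r. ((of_nat r + a) gchoose j) * c powi (int j - int r))))"
    unfolding z_def by (intro sums_sum sums_mult sums_gchoose_plus_of_nat_power c)
  have coeff_eq: "1 / (b + 1) / ((of_nat r + b + 1) gchoose r) * ((of_nat r + a + of_nat k) gchoose r)
      = pochhammer (a + of_nat k + 1) r / pochhammer (b + 1) (Suc r)" for r k
  proof -
    have "1 / (b + 1) / ((of_nat r + b + 1) gchoose r) * ((of_nat r + a + of_nat k) gchoose r)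
        = (((a + of_nat k) + of_nat r) gchoose r) / (((b + 1) + of_nat r) gchoose r) / (b + 1)"
      by (simp add: divide_inverse add_ac mult_ac)
    then show ?thesis
      unfolding gchoose_div_gchoose by (simp add: pochhammer_rec add_ac mult_ac)
  qed
  have "(\<Sum>r=0..n. 1 / (b + 1) / ((of_nat r + b + 1) gchoose r) * (((of_nat r + a + of_nat k) gchoose r) * z ^ k))
      = poch_quot_sum n b (a + of_nat k) * z ^ k" for k
    unfolding poch_quot_sum_def sum_distrib_right mult.assoc[symmetric] coeff_eq ..
  moreover have "(\<Sum>r=0..n. 1 / (b + 1) / ((of_nat r + b + 1) gchoose r)
              * ((c + 1) / c * (\<Sum>j=0..r. ((of_nat r + a) gchoose j) * c powi (int j - int r))))
      = (c + 1) / c * (1 / (b + 1) * (\<Sum>r=0..n. \<Sum>j=0..r.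
          ((of_nat r + a) gchoose j) / ((of_nat r + b + 1) gchoose r) * c powi (int j - int r)))"
    by (simp add: sum_distrib_left sum_divide_distrib mult_ac)
  ultimately show ?thesis using S by (simp add: z_def)
qed

lemma dsum_eq_rhs:
  fixes a b c :: complex
  assumes b: "b + 1 \<notin> \<int>\<^sub>\<le>\<^sub>0" and "c \<noteq> 0"
  shows "dsum n a b c / (of_nat n + b + 1) = 1 / (b + 1) * (\<Sum>r=0..n. \<Sum>j=0..r.
          ((of_nat r + a) gchoose j) / ((of_nat r + b + 1) gchoose r) * c powi (int j - int r))"
proof (rule analytic_continuation_open[where s = "{c. 1 < cmod (c + 1)}" and s' = "- {0}"
    and f = "\<lambda>c. dsum n a b c / (of_nat n + b + 1)" and z = c and g = "\<lambda>c. 1 / (b + 1) * (\<Sum>r=0..n. \<Sum>j=0..r.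
          ((of_nat r + a) gchoose j) / ((of_nat r + b + 1) gchoose r) * c powi (int j - int r))"])
  show "open {c :: complex. 1 < cmod (c + 1)}"
    by (intro open_Collect_less continuous_intros)
  show "{c :: complex. 1 < cmod (c + 1)} \<noteq> {}" by (auto intro!: exI[of _ 1])
  show "{c :: complex. 1 < cmod (c + 1)} \<subseteq> - {0}" by auto
  show "connected (- {0 :: complex})" by (simp add: connected_punctured_universe)
  show "(\<lambda>c. dsum n a b c / (of_nat n + b + 1)) holomorphic_on - {0}"
    unfolding dsum_def by (intro holomorphic_intros) auto
  show "(\<lambda>c. 1 / (b + 1) * (\<Sum>r=0..n. \<Sum>j=0..r.
          ((of_nat r + a) gchoose j) / ((of_nat r + b + 1) gchoose r) * c powi (int j - int r)))
      holomorphic_on - {0}"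
    by (intro holomorphic_intros) auto
  fix c :: complex
  assume "c \<in> {c. 1 < cmod (c + 1)}"
  then have c: "1 < cmod (c + 1)" by simp
  then have "(c + 1) / c \<noteq> 0" by auto
  moreover have "(c + 1) / c * (dsum n a b c / (of_nat n + b + 1)) = (c + 1) / c * (1 / (b + 1) * (\<Sum>r=0..n. \<Sum>j=0..r.
          ((of_nat r + a) gchoose j) / ((of_nat r + b + 1) gchoose r) * c powi (int j - int r)))"
    using sums_unique2[OF sums_poch_quot_sum_dsum[OF b c] sums_poch_quot_sum_rhs[OF c]]
    by (simp only: times_divide_eq_right)
  ultimately show "dsum n a b c / (of_nat n + b + 1) = 1 / (b + 1) * (\<Sum>r=0..n. \<Sum>j=0..r.
          ((of_nat r + a) gchoose j) / ((of_nat r + b + 1) gchoose r) * c powi (int j - int r))"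
    using mult_left_cancel by blast
qed (use assms in auto)

lemma pochhammer_div_pochhammer_plus1:
  fixes u :: "'a :: field_char_0"
  assumes "u \<notin> \<int>\<^sub>\<le>\<^sub>0"
  shows "pochhammer u k / pochhammer (u + 1) k = u / (u + of_nat k)"
proof -
  have "pochhammer u k * (u + of_nat k) = u * pochhammer (u + 1) k"
    using pochhammer_rec[of u k] pochhammer_rec'[of u k] by (simp add: mult_ac)
  moreover have "pochhammer (u + 1) k \<noteq> 0"
    using pochhammer_plus_of_nat_neq_0[OF assms, of 1] by simp
  moreover have "u + of_nat k \<noteq> 0" using plus_of_nat_neq_0[OF assms] .
  ultimately show ?thesis by (simp add: field_simps)
qed

lemma summable_div_plus_of_nat_power:
  fixes u z :: complex
  assumes "norm z < 1"
  shows "summable (\<lambda>k. u / (u + of_nat k) * z ^ k)"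
proof (rule summable_comparison_test_ev)
  show "summable (\<lambda>k. norm z ^ k)" using assms by (simp add: summable_geometric)
  have "(\<lambda>k. u / (u + of_nat k)) \<longlonglongrightarrow> 0"
    by (intro tendsto_divide_0[OF tendsto_const] tendsto_add_filterlim_at_infinity[OF tendsto_const] tendsto_of_nat)
  then have "eventually (\<lambda>k. norm (u / (u + of_nat k)) < 1) sequentially"
    using order_tendstoD(2)[OF tendsto_norm_zero] by force
  then show "eventually (\<lambda>k. norm (u / (u + of_nat k) * z ^ k) \<le> norm z ^ k) sequentially"
  proof eventually_elim
    case (elim k)
    then have "norm (u / (u + of_nat k)) * norm z ^ k \<le> norm z ^ k"
      by (intro mult_left_le_one_le) auto
    then show ?case by (simp only: norm_mult norm_power)
  qed
qed

lemma sums_hyp2F1_1: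
  fixes u z :: complex
  assumes "u \<notin> \<int>\<^sub>\<le>\<^sub>0" "norm z < 1"
  shows "(\<lambda>k. u / (u + of_nat k) * z ^ k) sums hyp2F1 1 u (u + 1) z"
proof -
  have "pochhammer 1 k * pochhammer u k / pochhammer (u + 1) k * z ^ k / fact k = u / (u + of_nat k) * z ^ k" for k
  proof -
    have "pochhammer 1 k * pochhammer u k / pochhammer (u + 1) k * z ^ k / fact k
        = pochhammer u k / pochhammer (u + 1) k * z ^ k"
      by (simp flip: pochhammer_fact)
    then show ?thesis unfolding pochhammer_div_pochhammer_plus1[OF assms(1)] .
  qed
  then show ?thesis
    unfolding hyp2F1_def using summable_sums[OF summable_div_plus_of_nat_power[OF assms(2)]] by simp
qed

lemma hyp3F2_term_shift:
  fixes u x z :: "'a :: field_char_0"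
  assumes u: "u \<notin> \<int>\<^sub>\<le>\<^sub>0" and x: "x + 1 \<notin> \<int>\<^sub>\<le>\<^sub>0"
  shows "pochhammer (x + 1) m * (pochhammer 1 k * pochhammer u k * pochhammer (x + 1 + of_nat m) k
        / (pochhammer (u + 1) k * pochhammer (x + 1) k) * z ^ k / fact k)
       = u / (u + of_nat k) * pochhammer (x + of_nat k + 1) m * z ^ k"
proof -
  have "pochhammer (u + 1) k \<noteq> 0" "pochhammer (x + 1) k \<noteq> 0"
    using pochhammer_plus_of_nat_neq_0[OF u, of 1] pochhammer_neq_0[OF x] by auto
  then have "pochhammer (x + 1) m * (pochhammer 1 k * pochhammer u k * pochhammer (x + 1 + of_nat m) k
        / (pochhammer (u + 1) k * pochhammer (x + 1) k) * z ^ k / fact k)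
      = pochhammer u k / pochhammer (u + 1) k
        * (pochhammer (x + 1) m * pochhammer (x + 1 + of_nat m) k / pochhammer (x + 1) k) * z ^ k"
    by (simp add: field_simps flip: pochhammer_fact)
  also have "pochhammer (x + 1) m * pochhammer (x + 1 + of_nat m) k / pochhammer (x + 1) k
      = pochhammer (x + of_nat k + 1) m"
    unfolding pochhammer_swap_shift using \<open>pochhammer (x + 1) k \<noteq> 0\<close> by (simp add: add_ac)
  finally show ?thesis unfolding pochhammer_div_pochhammer_plus1[OF u] .
qed

lemma dsum_hypergeometric:
  fixes a b c :: complex
  assumes b: "b + 1 \<notin> \<int>\<^sub>\<le>\<^sub>0" and c: "1 < cmod (c + 1)"
    and ab: "a - b \<notin> \<int>\<^sub>\<le>\<^sub>0" and a: "a + 1 \<notin> \<int>\<^sub>\<le>\<^sub>0"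
  shows "(a - b) * (c + 1) / ((of_nat n + b + 1) * c) * dsum n a b c =
      pochhammer (a + 1) (n + 1) / pochhammer (b + 1) (n + 1) *
        hyp3F2 1 (a - b) (of_nat n + a + 2) (a - b + 1) (a + 1) (1 / (c + 1))
      - hyp2F1 1 (a - b) (a - b + 1) (1 / (c + 1))"
proof -
  define z where "z = 1 / (c + 1)"
  define V where "V = (c + 1) / c * dsum n a b c / (of_nat n + b + 1)"
  define F where "F = hyp2F1 1 (a - b) (a - b + 1) z"
  define A where "A = pochhammer (a + 1) (Suc n) / pochhammer (b + 1) (Suc n)"
  define t where "t k = pochhammer 1 k * pochhammer (a - b) k * pochhammer (of_nat n + a + 2) k
      / (pochhammer (a - b + 1) k * pochhammer (a + 1) k) * z ^ k / fact k" for k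
  have "norm z < 1" unfolding z_def using c by (simp add: norm_divide divide_less_eq)
  have "A \<noteq> 0" unfolding A_def using pochhammer_neq_0[OF a] pochhammer_neq_0[OF b] by simp
  have "A * t k = (a - b) * (poch_quot_sum n b (a + of_nat k) * z ^ k) + (a - b) / (a - b + of_nat k) * z ^ k" for k
  proof -
    define R where "R = pochhammer (a + of_nat k + 1) (Suc n) / pochhammer (b + 1) (Suc n)"
    have e: "a + 1 + of_nat (Suc n) = of_nat n + a + 2" by simp
    have "pochhammer (a + 1) (Suc n) * t k
        = (a - b) / (a - b + of_nat k) * pochhammer (a + of_nat k + 1) (Suc n) * z ^ k"
      using hyp3F2_term_shift[OF ab a, where m = "Suc n" and k = k and z = z] unfolding t_def e .
    then have "A * t k = (a - b) / (a - b + of_nat k) * R * z ^ k"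
      unfolding A_def R_def by (simp add: field_simps)
    moreover have "R = (a - b + of_nat k) * poch_quot_sum n b (a + of_nat k) + 1"
      using poch_quot_sum_telescope[OF b, of "a + of_nat k" n] by (simp add: R_def algebra_simps)
    moreover have "a - b + of_nat k \<noteq> 0" using plus_of_nat_neq_0[OF ab] .
    ultimately show ?thesis by (simp add: field_simps)
  qed
  moreover have "(\<lambda>k. (a - b) * (poch_quot_sum n b (a + of_nat k) * z ^ k) + (a - b) / (a - b + of_nat k) * z ^ k)
      sums ((a - b) * V + F)"
    unfolding z_def V_def F_def
    by (intro sums_add sums_mult sums_poch_quot_sum_dsum sums_hyp2F1_1 b c ab \<open>norm z < 1\<close>[unfolded z_def])
  ultimately have "(\<lambda>k. A * t k) sums (A * (((a - b) * V + F) / A))" using \<open>A \<noteq> 0\<close> by simp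
  then have "hyp3F2 1 (a - b) (of_nat n + a + 2) (a - b + 1) (a + 1) z = ((a - b) * V + F) / A"
    unfolding sums_mult_iff[OF \<open>A \<noteq> 0\<close>] hyp3F2_def t_def by (rule sums_unique[symmetric])
  then have "A * hyp3F2 1 (a - b) (of_nat n + a + 2) (a - b + 1) (a + 1) z - F = (a - b) * V"
    using \<open>A \<noteq> 0\<close> by simp
  moreover have "(a - b) * (c + 1) / ((of_nat n + b + 1) * c) * dsum n a b c = (a - b) * V"
    unfolding V_def by (simp add: divide_inverse mult_ac)
  ultimately show ?thesis unfolding z_def F_def A_def by simp
qed

lemma hyp3F2_1_1_2_term:
  fixes y z :: "'a :: field_char_0"
  assumes y: "y \<notin> \<int>\<^sub>\<le>\<^sub>0"
  shows "(y + of_nat m) / y * z * (pochhammer 1 j * pochhammer 1 j * pochhammer (y + of_nat m + 1) j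
        / (pochhammer 2 j * pochhammer (y + 1) j) * z ^ j / fact j)
       = pochhammer (y + of_nat (Suc j)) m / pochhammer y m / of_nat (Suc j) * z ^ Suc j"
proof -
  have "y \<noteq> 0" "pochhammer (y + 1) j \<noteq> 0" "pochhammer y m \<noteq> 0"
    using y pochhammer_plus_of_nat_neq_0[OF y, of 1] pochhammer_neq_0[OF y] by auto
  define F where "F = (fact j :: 'a)"
  define Q where "Q = pochhammer (y + 1) j"
  define M where "M = pochhammer (y + of_nat m + 1) j"
  define s where "s = (of_nat (Suc j) :: 'a)"
  have "F \<noteq> 0" "s \<noteq> 0" unfolding F_def s_def by (rule fact_nonzero, rule of_nat_neq_0)
  have "fact (Suc j) = pochhammer (2 :: 'a) j"
    by (simp only: pochhammer_fact pochhammer_rec) simp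
  then have "pochhammer 2 j = s * F"
    by (simp add: s_def F_def)
  then have "(y + of_nat m) / y * z * (pochhammer 1 j * pochhammer 1 j * pochhammer (y + of_nat m + 1) j
        / (pochhammer 2 j * pochhammer (y + 1) j) * z ^ j / fact j)
      = (y + of_nat m) * M / (y * Q) / s * z ^ Suc j"
    using \<open>y \<noteq> 0\<close> \<open>pochhammer (y + 1) j \<noteq> 0\<close> \<open>F \<noteq> 0\<close> \<open>s \<noteq> 0\<close>
    by (simp add: Q_def M_def field_simps flip: F_def pochhammer_fact)
  also have "(y + of_nat m) * M = pochhammer (y + of_nat m) (Suc j)"
    by (simp add: M_def pochhammer_rec)
  also have "y * Q = pochhammer y (Suc j)"
    by (simp add: Q_def pochhammer_rec)
  also have "pochhammer (y + of_nat m) (Suc j) / pochhammer y (Suc j)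
      = pochhammer (y + of_nat (Suc j)) m / pochhammer y m"
    using pochhammer_swap_shift[of y m "Suc j"] \<open>pochhammer y m \<noteq> 0\<close> pochhammer_neq_0[OF y, of "Suc j"]
    by (simp add: field_simps)
  finally show ?thesis unfolding s_def .
qed

lemma poch_quot_sum_tail_term:
  fixes b z :: complex
  assumes b: "b + 1 \<notin> \<int>\<^sub>\<le>\<^sub>0"
  shows "poch_quot_sum n b (b + of_nat (Suc j)) * z ^ Suc j
    = (of_nat n + b + 2) / (b + 1) * z * (pochhammer 1 j * pochhammer 1 j * pochhammer (of_nat n + b + 3) j
        / (pochhammer 2 j * pochhammer (b + 2) j) * z ^ j / fact j) - z ^ Suc j / of_nat (Suc j)"
proof -
  define R where "R = pochhammer (b + 1 + of_nat (Suc j)) (Suc n) / pochhammer (b + 1) (Suc n)"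
  have "of_nat (Suc j) * poch_quot_sum n b (b + of_nat (Suc j)) = R - 1"
    using poch_quot_sum_telescope[OF b, of "b + of_nat (Suc j)" n] by (simp add: R_def add_ac)
  then have "poch_quot_sum n b (b + of_nat (Suc j)) * z ^ Suc j = (R - 1) / of_nat (Suc j) * z ^ Suc j"
    by (metis nonzero_mult_div_cancel_left of_nat_neq_0)
  also have "\<dots> = R / of_nat (Suc j) * z ^ Suc j - z ^ Suc j / of_nat (Suc j)"
    by (simp add: diff_divide_distrib algebra_simps)
  also have "R / of_nat (Suc j) * z ^ Suc j
      = (of_nat n + b + 2) / (b + 1) * z * (pochhammer 1 j * pochhammer 1 j * pochhammer (of_nat n + b + 3) j
        / (pochhammer 2 j * pochhammer (b + 2) j) * z ^ j / fact j)"
    using hyp3F2_1_1_2_term[OF b, of "Suc n" z j] by (simp add: R_def add_ac numeral_eq_Suc)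
  finally show ?thesis .
qed

lemma poch_quot_sum_head:
  fixes b C :: complex
  assumes b: "b + 1 \<notin> \<int>\<^sub>\<le>\<^sub>0" and "C \<noteq> 0"
  shows "C ^ m * (\<Sum>k<Suc m. poch_quot_sum n b (b - of_nat m + of_nat k) * (1 / C) ^ k)
    = poch_quot_sum n b b - (\<Sum>l=1..m. C ^ l / of_nat l *
        (pochhammer (b + 1 - of_nat l) (Suc n) / pochhammer (b + 1) (Suc n) - 1))"
proof -
  define g where "g l = C ^ l * poch_quot_sum n b (b - of_nat l)" for l
  have "C ^ m * (\<Sum>k<Suc m. poch_quot_sum n b (b - of_nat m + of_nat k) * (1 / C) ^ k)
      = (\<Sum>k=0..m. g (m - k))"
    unfolding sum_distrib_left atLeast0AtMost lessThan_Suc_atMost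
  proof (rule sum.cong)
    fix k assume "k \<in> {..m}"
    then have "k \<le> m" by simp
    then show "C ^ m * (poch_quot_sum n b (b - of_nat m + of_nat k) * (1 / C) ^ k) = g (m - k)"
      using \<open>C \<noteq> 0\<close> by (simp add: g_def of_nat_diff power_diff power_one_over field_simps)
  qed simp
  also have "\<dots> = (\<Sum>l=0..m. g l)"
    by (subst sum.atLeastAtMost_rev) (auto intro: sum.cong)
  also have "\<dots> = g 0 + (\<Sum>l=1..m. g l)"
    by (simp add: sum.atLeast_Suc_atMost)
  also have "(\<Sum>l=1..m. g l) = - (\<Sum>l=1..m. C ^ l / of_nat l *
        (pochhammer (b + 1 - of_nat l) (Suc n) / pochhammer (b + 1) (Suc n) - 1))"
    unfolding sum_negf[symmetric]
  proof (rule sum.cong)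
    fix l assume "l \<in> {1..m}"
    then have "of_nat l \<noteq> (0 :: complex)" by simp
    define R where "R = pochhammer (b + 1 - of_nat l) (Suc n) / pochhammer (b + 1) (Suc n)"
    have "of_nat l * poch_quot_sum n b (b - of_nat l) = - (R - 1)"
      using poch_quot_sum_telescope[OF b, of "b - of_nat l" n] by (simp add: R_def algebra_simps)
    then have \<Phi>: "poch_quot_sum n b (b - of_nat l) = - (R - 1) / of_nat l"
      using \<open>of_nat l \<noteq> 0\<close> by (simp add: eq_divide_eq mult.commute)
    show "g l = - (C ^ l / of_nat l *
        (pochhammer (b + 1 - of_nat l) (Suc n) / pochhammer (b + 1) (Suc n) - 1))"
      unfolding g_def R_def[symmetric] \<Phi> by algebra
  qed simp
  finally show ?thesis by (simp add: g_def)
qed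

lemma sums_Ln_one_minus:
  fixes z :: complex
  assumes "norm z < 1"
  shows "(\<lambda>k. - (z ^ Suc k) / of_nat (Suc k)) sums Ln (1 - z)"
proof -
  have "(\<lambda>k. - (z ^ k) / of_nat k) sums Ln (1 - z)"
    using Ln_series'[of "- z"] assms by simp
  then show ?thesis
    by (subst (asm) sums_zero_iff_shift[where n = 1, symmetric]) simp_all
qed

lemma dsum_digamma:
  fixes b c :: complex
  assumes b: "b + 1 \<notin> \<int>\<^sub>\<le>\<^sub>0" and c: "1 < cmod (c + 1)"
  shows "(c + 1) ^ (m + 1) / ((of_nat n + b + 1) * c) * dsum n (b - of_nat m) b c =
      (of_nat n + b + 2) / ((b + 1) * (c + 1)) *
        hyp3F2 1 1 (of_nat n + b + 3) 2 (b + 2) (1 / (c + 1))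
      + Digamma (of_nat n + b + 2) - Digamma (b + 1) + Ln (c / (c + 1))
      - (\<Sum>l=1..m. (c + 1) ^ l / of_nat l *
           (pochhammer (b + 1 - of_nat l) (n + 1) / pochhammer (b + 1) (n + 1) - 1))"
proof -
  define C where "C = c + 1"
  define z where "z = 1 / C"
  define f where "f k = poch_quot_sum n b (b - of_nat m + of_nat k) * z ^ k" for k
  define V where "V = C / c * dsum n (b - of_nat m) b c / (of_nat n + b + 1)"
  define P where "P = (\<Sum>k<Suc m. f k)"
  define B where "B = (of_nat n + b + 2) / ((b + 1) * C)"
  define h where "h j = pochhammer 1 j * pochhammer 1 j * pochhammer (of_nat n + b + 3) j
      / (pochhammer 2 j * pochhammer (b + 2) j) * z ^ j / fact j" for j
  have "C \<noteq> 0" "c \<noteq> 0" using c by (auto simp: C_def)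
  have "norm z < 1" unfolding z_def C_def using c by (simp add: norm_divide divide_less_eq)
  have "B \<noteq> 0"
    using \<open>C \<noteq> 0\<close> plus_of_nat_neq_0[OF b, of 0] plus_of_nat_neq_0[OF b, of "Suc n"]
    by (simp add: B_def add_ac)
  have "f sums V"
    unfolding f_def[abs_def] V_def z_def C_def by (rule sums_poch_quot_sum_dsum[OF b c])
  then have "(\<lambda>j. C ^ m * f (j + Suc m)) sums (C ^ m * (V - P))"
    unfolding P_def by (intro sums_mult sums_split_initial_segment)
  moreover have "C ^ m * f (j + Suc m) = B * h j - z ^ Suc j / of_nat (Suc j)" for j
  proof -
    have "C ^ m * z ^ (j + Suc m) = z ^ Suc j"
      using \<open>C \<noteq> 0\<close> by (simp add: z_def power_add power_one_over)
    moreover have "b - of_nat m + of_nat (j + Suc m) = b + of_nat (Suc j)" by simp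
    ultimately have "C ^ m * f (j + Suc m) = poch_quot_sum n b (b + of_nat (Suc j)) * z ^ Suc j"
      unfolding f_def by (metis mult.left_commute)
    then show ?thesis
      unfolding poch_quot_sum_tail_term[OF b] by (simp add: B_def h_def z_def)
  qed
  ultimately have "(\<lambda>j. B * h j - z ^ Suc j / of_nat (Suc j)) sums (C ^ m * (V - P))" by simp
  from sums_diff[OF this sums_Ln_one_minus[OF \<open>norm z < 1\<close>]]
  have "(\<lambda>j. B * h j) sums (C ^ m * (V - P) - Ln (1 - z))" by simp
  then have "h sums ((C ^ m * (V - P) - Ln (1 - z)) / B)"
    using sums_mult_iff[OF \<open>B \<noteq> 0\<close>, of h "(C ^ m * (V - P) - Ln (1 - z)) / B"] \<open>B \<noteq> 0\<close> by simp
  then have hyp: "B * hyp3F2 1 1 (of_nat n + b + 3) 2 (b + 2) z = C ^ m * V - C ^ m * P - Ln (1 - z)"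
    unfolding hyp3F2_def h_def[abs_def, symmetric] using \<open>B \<noteq> 0\<close>
    by (simp add: sums_iff right_diff_distrib[symmetric])
  have head: "C ^ m * P = Digamma (of_nat n + b + 2) - Digamma (b + 1) - (\<Sum>l=1..m. C ^ l / of_nat l *
        (pochhammer (b + 1 - of_nat l) (n + 1) / pochhammer (b + 1) (n + 1) - 1))"
    using poch_quot_sum_head[OF b \<open>C \<noteq> 0\<close>, of m n] poch_quot_sum_self[OF b, of n]
    unfolding P_def f_def z_def by simp
  have "1 - z = c / C" using \<open>C \<noteq> 0\<close> by (simp add: z_def C_def field_simps)
  have L: "(c + 1) ^ (m + 1) / ((of_nat n + b + 1) * c) * dsum n (b - of_nat m) b c = C ^ m * V"
    by (simp add: C_def V_def divide_inverse mult_ac)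
  have coeff: "(of_nat n + b + 2) / ((b + 1) * (c + 1)) = B" "1 / (c + 1) = z"
    by (simp_all add: B_def C_def z_def)
  show ?thesis
    unfolding L coeff unfolding C_def[symmetric] hyp[unfolded \<open>1 - z = c / C\<close>] head
    by (simp add: algebra_simps)
qed

theorem theorem2:
  fixes n :: nat and a b c :: complex
  assumes b_notneg: "\<forall>k::nat. b \<noteq> - of_nat (Suc k)"
  shows
  "(c \<noteq> 0 \<longrightarrow>
      dsum n a b c / (of_nat n + b + 1) =
      (1 / (b + 1)) * (\<Sum>k=0..n. \<Sum>j=0..k.
          ((of_nat k + a) gchoose j) / ((of_nat k + b + 1) gchoose k) * c powi (int j - int k)))
   \<and>
   ((cmod (c + 1) > 1 \<and> (\<forall>k::nat. a - b \<noteq> - of_nat k) \<and> (\<forall>k::nat. a \<noteq> - of_nat (Suc k))) \<longrightarrow>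
      (a - b) * (c + 1) / ((of_nat n + b + 1) * c) * dsum n a b c =
      pochhammer (a + 1) (n + 1) / pochhammer (b + 1) (n + 1) *
        hyp3F2 1 (a - b) (of_nat n + a + 2) (a - b + 1) (a + 1) (1 / (c + 1))
      - hyp2F1 1 (a - b) (a - b + 1) (1 / (c + 1)))
   \<and>
   (\<forall>m::nat. (cmod (c + 1) > 1 \<and> a = b - of_nat m) \<longrightarrow>
      (c + 1) ^ (m + 1) / ((of_nat n + b + 1) * c) * dsum n a b c =
      (of_nat n + b + 2) / ((b + 1) * (c + 1)) *
        hyp3F2 1 1 (of_nat n + b + 3) 2 (b + 2) (1 / (c + 1))
      + Digamma (of_nat n + b + 2) - Digamma (b + 1) + Ln (c / (c + 1))
      - (\<Sum>l=1..m. (c + 1) ^ l / of_nat l *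
           (pochhammer (b + 1 - of_nat l) (n + 1) / pochhammer (b + 1) (n + 1) - 1)))"
proof -
  have b: "b + 1 \<notin> \<int>\<^sub>\<le>\<^sub>0"
    using b_notneg by (simp add: plus_one_notin_nonpos_Ints_iff)
  note hypergeometric = dsum_hypergeometric[OF b,
      unfolded plus_one_notin_nonpos_Ints_iff, unfolded notin_nonpos_Ints_iff]
  show ?thesis
    using dsum_eq_rhs[OF b] hypergeometric dsum_digamma[OF b] by blast
qed

end
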